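(* Let $\epsilon\ge 0$ and let $A\subseteq\{0,1\}^n$ with $|A|\ge 2^{(1-\epsilon)n}$. Then for any $L\subseteq[n]$ there is a subset $A'\subseteq A$ that is $\epsilon$-dense with respect to $L$.
   Context: $[n]=\{1,\dots,n\}$. For $x\in\{0,1\}^n$ and $P\subseteq[n]$, $x_P\in\{0,1\}^P$ denotes the projection of $x$ onto the coordinates in $P$, and for $X\subseteq\{0,1\}^n$, $X_P=\{x_P: x\in X\}$. A set $A\subseteq\{0,1\}^n$ is $\epsilon$-dense with respect to $L\subseteq[n]$ if $|A_L|\ge 2^{|L|-\epsilon n-1}$ and for every $a\in A$ the number of $a'\in A$ with $a'_L=a_L$ is at least $2^{n-|L|-\epsilon n-1}$. *)

theory Defs
  imports "HOL-Analysis.Analysis"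
begin

text \<open>The hypercube {0,1}^n, with coordinates indexed by [n] = {1..n}; a point is a
  boolean function on nat that is False outside {1..n}.\<close>
definition cube :: "nat \<Rightarrow> (nat \<Rightarrow> bool) set" where
  "cube n = {x. \<forall>i. i \<notin> {1..n} \<longrightarrow> \<not> x i}"

definition proj :: "nat set \<Rightarrow> (nat \<Rightarrow> bool) \<Rightarrow> (nat \<Rightarrow> bool)" where
  "proj P x = (\<lambda>i. if i \<in> P then x i else False)"

definition eps_dense :: "nat \<Rightarrow> real \<Rightarrow> nat set \<Rightarrow> (nat \<Rightarrow> bool) set \<Rightarrow> bool" where
  "eps_dense n \<epsilon> L A \<longleftrightarrow>
     real (card (proj L ` A)) \<ge> 2 powr (real (card L) - \<epsilon> * real n - 1) \<and>
     (\<forall>a\<in>A. real (card {a'\<in>A. proj L a' = proj L a})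
              \<ge> 2 powr (real n - real (card L) - \<epsilon> * real n - 1))"

end

theory Submission
  imports Defs
begin

text \<open>Discard from \<open>A\<close> every point whose fibre under \<open>proj L\<close> has fewer than
  \<open>T = 2^(n - |L| - \<epsilon>n - 1)\<close> points. Removing whole fibres leaves the surviving fibres
  intact, so they all have at least \<open>T\<close> points; and since there are at most \<open>2^|L|\<close>
  fibres, at most \<open>2^|L| T = 2^((1-\<epsilon>)n)/2\<close> points are lost, i.e. at least half of \<open>A\<close>
  survives. As every fibre inside the cube has at most \<open>2^(n-|L|)\<close> points, the
  survivors must project onto at least \<open>2^(|L| - \<epsilon>n - 1)\<close> points.\<close>

definition heavy_part :: "('a \<Rightarrow> 'b) \<Rightarrow> real \<Rightarrow> 'a set \<Rightarrow> 'a set" where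
  "heavy_part f T A = {a\<in>A. T \<le> real (card {a'\<in>A. f a' = f a})}"

lemma card_le_card_image_mult:
  assumes "finite A" and "\<And>a. a \<in> A \<Longrightarrow> real (card {a'\<in>A. f a' = f a}) \<le> M"
  shows "real (card A) \<le> real (card (f ` A)) * M"
proof -
  have "card A = (\<Sum>y\<in>f ` A. card {a\<in>A. f a = y})"
    using sum.image_gen[OF \<open>finite A\<close>, of "\<lambda>_. 1 :: nat" f] by simp
  then have "real (card A) = (\<Sum>y\<in>f ` A. real (card {a\<in>A. f a = y}))"
    by simp
  also have "\<dots> \<le> (\<Sum>y\<in>f ` A. M)"
    using assms(2) by (intro sum_mono) auto
  finally show ?thesis
    by simp
qed

lemma heavy_part_subset: "heavy_part f T A \<subseteq> A"
  by (auto simp: heavy_part_def)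

lemma fiber_heavy_part:
  assumes "a \<in> heavy_part f T A"
  shows "{a'\<in>heavy_part f T A. f a' = f a} = {a'\<in>A. f a' = f a}"
  using assms by (auto simp: heavy_part_def)

lemma card_heavy_part_ge:
  assumes "finite A" and "T \<ge> 0"
  shows "real (card A) \<le> real (card (heavy_part f T A)) + real (card (f ` A)) * T"
proof -
  let ?H = "heavy_part f T A"
  have light_fibers: "real (card {a'\<in>A - ?H. f a' = f a}) \<le> T" if "a \<in> A - ?H" for a
  proof -
    have "card {a'\<in>A - ?H. f a' = f a} \<le> card {a'\<in>A. f a' = f a}"
      using \<open>finite A\<close> by (intro card_mono) auto
    with that show ?thesis
      by (auto simp: heavy_part_def)
  qed
  have "real (card (A - ?H)) \<le> real (card (f ` (A - ?H))) * T"
    using \<open>finite A\<close> light_fibers by (intro card_le_card_image_mult) auto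
  also have "\<dots> \<le> real (card (f ` A)) * T"
    using \<open>finite A\<close> \<open>T \<ge> 0\<close> by (intro mult_right_mono) (auto intro: card_mono)
  moreover have "card A = card ?H + card (A - ?H)"
    using \<open>finite A\<close> card_Diff_subset[of ?H A] card_mono[of A ?H] heavy_part_subset[of f T A]
    by (simp add: finite_subset)
  ultimately show ?thesis
    by simp
qed

lemma card_image_heavy_part_ge:
  assumes "finite A" and "T \<ge> 0" and "real (card (f ` A)) \<le> K"
    and "\<And>a. a \<in> A \<Longrightarrow> real (card {a'\<in>A. f a' = f a}) \<le> M"
  shows "real (card A) - K * T \<le> real (card (f ` heavy_part f T A)) * M"
proof -
  let ?H = "heavy_part f T A"
  have "real (card A) - K * T \<le> real (card A) - real (card (f ` A)) * T"
    using assms(2,3) by (simp add: mult_right_mono)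
  also have "\<dots> \<le> real (card ?H)"
    using card_heavy_part_ge[OF assms(1,2), of f] by linarith
  also have "\<dots> \<le> real (card (f ` ?H)) * M"
  proof (rule card_le_card_image_mult)
    show "finite ?H"
      using assms(1) heavy_part_subset by (rule finite_subset[rotated])
    show "real (card {a'\<in>?H. f a' = f a}) \<le> M" if "a \<in> ?H" for a
      using that fiber_heavy_part[OF that] assms(4) heavy_part_subset by auto
  qed
  finally show ?thesis .
qed

definition supported_on :: "nat set \<Rightarrow> (nat \<Rightarrow> bool) set" where
  "supported_on P = {x. \<forall>i. i \<notin> P \<longrightarrow> \<not> x i}"

lemma bij_betw_supported_on_Pow: "bij_betw (\<lambda>x. {i. x i}) (supported_on P) (Pow P)"
  by (rule bij_betwI[where g = "\<lambda>S i. i \<in> S"]) (auto simp: supported_on_def)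

lemma card_supported_on: "finite P \<Longrightarrow> card (supported_on P) = 2 ^ card P"
  using bij_betw_same_card[OF bij_betw_supported_on_Pow] by (simp add: card_Pow)

lemma finite_supported_on: "finite P \<Longrightarrow> finite (supported_on P)"
  using bij_betw_finite[OF bij_betw_supported_on_Pow] by simp

lemma cube_eq_supported_on: "cube n = supported_on {1..n}"
  by (simp add: cube_def supported_on_def)

lemma proj_in_supported_on: "proj P x \<in> supported_on P"
  by (simp add: proj_def supported_on_def)

lemma card_proj_image_le:
  assumes "finite L"
  shows "card (proj L ` A) \<le> 2 ^ card L"
proof -
  have "card (proj L ` A) \<le> card (supported_on L)"
    using assms by (intro card_mono finite_supported_on) (auto simp: proj_in_supported_on)
  with assms show ?thesis
    by (simp add: card_supported_on)
qed

lemma card_proj_fiber_le: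
  assumes "B \<subseteq> cube n" and "L \<subseteq> {1..n}"
  shows "card {b\<in>B. proj L b = y} \<le> 2 ^ (n - card L)"
proof -
  let ?F = "{b\<in>B. proj L b = y}" and ?R = "{1..n} - L"
  \<comment> \<open>a point of the cube is determined by its projections onto \<open>L\<close> and onto \<open>[n] - L\<close>\<close>
  have "inj_on (proj ?R) ?F"
  proof (rule inj_onI, rule ext)
    fix u v i
    assume "u \<in> ?F" "v \<in> ?F" "proj ?R u = proj ?R v"
    then have "proj L u i = proj L v i" "proj ?R u i = proj ?R v i" "u \<in> cube n" "v \<in> cube n"
      using assms(1) by auto
    then show "u i = v i"
      by (auto simp: proj_def cube_def split: if_splits)
  qed
  then have "card ?F = card (proj ?R ` ?F)"
    by (rule card_image[symmetric])
  also have "\<dots> \<le> card (supported_on ?R)"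
    by (intro card_mono finite_supported_on) (auto simp: proj_in_supported_on)
  also have "\<dots> = 2 ^ (n - card L)"
    using assms(2) by (simp add: card_supported_on card_Diff_subset finite_subset)
  finally show ?thesis .
qed

theorem claim1:
  fixes n :: nat and \<epsilon> :: real and A :: "(nat \<Rightarrow> bool) set" and L :: "nat set"
  assumes "\<epsilon> \<ge> 0"
    and "A \<subseteq> cube n"
    and "real (card A) \<ge> 2 powr ((1 - \<epsilon>) * real n)"
    and "L \<subseteq> {1..n}"
  shows "\<exists>A'. A' \<subseteq> A \<and> eps_dense n \<epsilon> L A'"
proof -
  define k where "k = card L"
  define T :: real where "T = 2 powr (real n - real k - \<epsilon> * real n - 1)"
  define A' where "A' = heavy_part (proj L) T A"
  have "finite L" "k \<le> n"
    using assms(4) by (auto simp: k_def finite_subset dest: card_mono[rotated])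
  have "finite A"
    using assms(2) finite_supported_on[of "{1..n}"] by (auto simp: cube_eq_supported_on finite_subset)
  have "(2::real) powr ((1 - \<epsilon>) * real n) / 2 = 2 powr ((1 - \<epsilon>) * real n - 1)"
    by (simp add: powr_diff)
  then have half: "2 powr ((1 - \<epsilon>) * real n) / 2 = 2 ^ k * T"
    "2 powr ((1 - \<epsilon>) * real n) / 2 = 2 powr (real k - \<epsilon> * real n - 1) * 2 ^ (n - k)"
    using \<open>k \<le> n\<close> by (simp_all add: T_def powr_realpow [symmetric] powr_add [symmetric]
        of_nat_diff algebra_simps)
  have "real (card A) - 2 ^ k * T \<le> real (card (proj L ` A')) * 2 ^ (n - k)"
    unfolding A'_def
  proof (rule card_image_heavy_part_ge)
    show "real (card (proj L ` A)) \<le> 2 ^ k"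
      using card_proj_image_le[OF \<open>finite L\<close>, of A] unfolding k_def
      by (metis of_nat_le_iff of_nat_numeral of_nat_power)
    show "real (card {a'\<in>A. proj L a' = proj L a}) \<le> 2 ^ (n - k)" for a
      using card_proj_fiber_le[OF assms(2,4)] unfolding k_def
      by (metis of_nat_le_iff of_nat_numeral of_nat_power)
  qed (use \<open>finite A\<close> in \<open>simp_all add: T_def\<close>)
  then have "2 powr (real k - \<epsilon> * real n - 1) * 2 ^ (n - k)
      \<le> real (card (proj L ` A')) * 2 ^ (n - k)"
    using assms(3) half by linarith
  then have "2 powr (real k - \<epsilon> * real n - 1) \<le> real (card (proj L ` A'))"
    by simp
  moreover have "T \<le> real (card {a'\<in>A'. proj L a' = proj L a})" if "a \<in> A'" for a
    using that fiber_heavy_part[of a "proj L" T A] by (simp add: A'_def heavy_part_def)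
  ultimately have "eps_dense n \<epsilon> L A'"
    by (simp add: eps_dense_def T_def k_def)
  moreover have "A' \<subseteq> A"
    by (simp add: A'_def heavy_part_subset)
  ultimately show ?thesis
    by blast
qed

end
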